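(* For each $k\geq1$ let $m_k\in\mathbb{R}$, $\sigma_k>0$, and let $\theta^k$ be the distribution of $|X^k|$ where $X^k$ has normal law $\mathcal{N}(m_k,\sigma_k^2)$. Then $(\theta^k)_k$ satisfies the long-term condition (LTC) if and only if $\sigma_k\to\infty$ as $k\to\infty$.
   Context: For a Borel probability measure $\theta$ on $\mathbb{R}_+$ and $s\geq0$, $TV_s(\theta)=\sup_{Q\in\mathcal{B}(\mathbb{R}_+)}|\theta(Q)-\theta(Q+s)|$. A sequence $(\theta^k)_{k\ge1}$ of such measures satisfies the LTC if for every $S>0$, $\sup_{0\leq s\leq S}TV_s(\theta^k)\to0$ as $k\to\infty$. *)

theory Defs
  imports "HOL-Probability.Probability"
begin

text \<open>Total-variation shift functional TV_s of a Borel probability measure on R_+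
  (represented as a measure on the reals concentrated on [0,oo)).
  The supremum ranges over Borel subsets Q of R_+; Q + s is the translate.\<close>
definition TV_shift :: "real measure \<Rightarrow> real \<Rightarrow> real" where
  "TV_shift \<theta> s =
     (SUP Q \<in> {Q \<in> sets borel. Q \<subseteq> {0..}}. \<bar>measure \<theta> Q - measure \<theta> ((\<lambda>x. x + s) ` Q)\<bar>)"

definition LTC :: "(nat \<Rightarrow> real measure) \<Rightarrow> bool" where
  "LTC \<theta> \<longleftrightarrow> (\<forall>S>0. (\<lambda>k. SUP s \<in> {0..S}. TV_shift (\<theta> k) s) \<longlonglongrightarrow> 0)"

definition abs_normal_law :: "real \<Rightarrow> real \<Rightarrow> real measure" where
  "abs_normal_law m \<sigma> = distr (density lborel (normal_density m \<sigma>)) borel abs"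

end

theory Submission
  imports Defs
begin

(* If sigma_k -> oo: shifting N(m, sigma^2) by s changes the mass of a Borel set by at most
   s/sigma (the densities of N(m, sigma^2) and N(m - s, sigma^2) cross at m - s/2, and on each
   side the excess mass is that of a strip of width s, where the density is at most 1/sigma).
   The law of |X| splits into the masses of Q and -Q, so TV_s <= 2s/sigma.
   Conversely, if sigma_k <= M infinitely often, the interval [max 0 (|m| - sigma), |m| + sigma]
   has mass at least 1/3 under the law of |X|, and three of its translates by multiples of 3M
   are disjoint from it and from each other.  One of them has mass at most 2/9, so TV_s >= 1/9
   for some s <= 9M. *)

lemma measure_diff_le_of_positive_set:
  assumes "finite_measure M" "finite_measure N" "sets N = sets M"
    and A: "A \<in> sets M" and C: "C \<in> sets M"
    and pos: "\<And>B. B \<in> sets M \<Longrightarrow> B \<subseteq> C \<Longrightarrow> measure N B \<le> measure M B"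
    and neg: "\<And>B. B \<in> sets M \<Longrightarrow> B \<inter> C = {} \<Longrightarrow> measure M B \<le> measure N B"
  shows "measure M A - measure N A \<le> measure M C - measure N C"
proof -
  have split: "measure K X = measure K (X \<inter> Y) + measure K (X - Y)"
    if "finite_measure K" "X \<in> sets K" "Y \<in> sets K" for K X Y
    using finite_measure.finite_measure_Union[OF that(1), of "X \<inter> Y" "X - Y"] that
    by (simp add: Int_Diff_Un Int_Diff_disjoint)
  have "measure M A - measure N A
      = (measure M (A \<inter> C) - measure N (A \<inter> C)) + (measure M (A - C) - measure N (A - C))"
    using split[of M A C] split[of N A C] assms by simp
  also have "\<dots> \<le> (measure M (C \<inter> A) - measure N (C \<inter> A)) + (measure M (C - A) - measure N (C - A))"
    using neg[of "A - C"] pos[of "C - A"] A C by (auto simp: Int_commute)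
  also have "\<dots> = measure M C - measure N C"
    using split[of M C A] split[of N C A] assms by simp
  finally show ?thesis .
qed

lemma emeasure_density_mono:
  assumes [measurable]: "f \<in> borel_measurable M" "g \<in> borel_measurable M"
    and B: "B \<in> sets M" and le: "\<And>x. x \<in> B \<Longrightarrow> f x \<le> g x"
  shows "emeasure (density M f) B \<le> emeasure (density M g) B"
  using B by (auto simp: emeasure_density intro!: nn_integral_mono ennreal_leI
      split: split_indicator intro: le)

lemma measure_distr_abs:
  fixes M :: "real measure"
  assumes "finite_measure M" and sets_M: "sets M = sets borel" and null: "measure M {0} = 0"
    and R: "R \<in> sets borel" "R \<subseteq> {0..}"
  shows "measure (distr M borel abs) R = measure M R + measure M (uminus -` R)"
proof -
  interpret finite_measure M by fact
  have uR: "uminus -` R \<in> sets borel"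
    by (rule measurable_sets_borel[OF _ R(1)]) simp
  have "measure (distr M borel abs) R = measure M (abs -` R \<inter> space M)"
    using R by (intro measure_distr) (simp_all add: measurable_cong_sets[OF sets_M refl])
  also have "abs -` R \<inter> space M = R \<union> uminus -` R"
  proof -
    have "\<bar>x\<bar> \<in> R \<longleftrightarrow> x \<in> R \<or> - x \<in> R" for x
      using R(2) by (cases "0 \<le> x") auto
    then show ?thesis using sets_eq_imp_space_eq[OF sets_M] by auto
  qed
  also have "measure M (R \<union> uminus -` R) = measure M R + measure M (uminus -` R) - measure M (R \<inter> uminus -` R)"
    using R uR by (intro measure_Un3) (auto simp: fmeasurable_eq_sets sets_M)
  also have "measure M (R \<inter> uminus -` R) = 0"
  proof -
    have "R \<inter> uminus -` R \<subseteq> {0}"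
    proof
      fix x assume "x \<in> R \<inter> uminus -` R"
      then have "0 \<le> x" "0 \<le> - x"
        using R(2) by auto
      then show "x \<in> {0}" by simp
    qed
    then have "measure M (R \<inter> uminus -` R) \<le> measure M {0}"
      by (intro finite_measure_mono) (simp_all add: sets_M)
    then show ?thesis
      using null measure_nonneg[of M "R \<inter> uminus -` R"] by linarith
  qed
  finally show ?thesis by simp
qed

lemma disjoint_family_Icc_translates:
  fixes a b L :: real
  assumes "0 < L" "b - a < L"
  shows "disjoint_family (\<lambda>j::nat. {a + j * L..b + j * L})"
proof -
  have "{a + i * L..b + i * L} \<inter> {a + j * L..b + j * L} = {}" if "i < j" for i j :: nat
  proof -
    have "real i * L + L \<le> real j * L"
      using that \<open>0 < L\<close> mult_right_mono[of "real i + 1" "real j" L] by (simp add: algebra_simps)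
    then have "b + i * L < a + j * L"
      using \<open>b - a < L\<close> by linarith
    then show ?thesis
      by auto
  qed
  then show ?thesis
    unfolding disjoint_family_on_def by (metis Int_commute linorder_neqE_nat)
qed

lemma exists_le_of_sum_le:
  fixes f :: "'a \<Rightarrow> 'b::linordered_idom"
  assumes "finite I" "I \<noteq> {}" "sum f I \<le> of_nat (card I) * c"
  shows "\<exists>i\<in>I. f i \<le> c"
proof (rule ccontr)
  assume "\<not> (\<exists>i\<in>I. f i \<le> c)"
  then have "sum (\<lambda>_. c) I < sum f I"
    using assms by (intro sum_strict_mono) auto
  with assms show False
    by simp
qed

lemma TV_shift_le:
  assumes "\<And>Q. Q \<in> sets borel \<Longrightarrow> Q \<subseteq> {0..} \<Longrightarrow>
      \<bar>measure \<theta> Q - measure \<theta> ((\<lambda>x. x + s) ` Q)\<bar> \<le> c"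
  shows "TV_shift \<theta> s \<le> c"
  unfolding TV_shift_def by (rule cSUP_least) (auto intro: assms)

lemma (in prob_space) abs_prob_diff_le_1: "\<bar>prob A - prob B\<bar> \<le> 1"
  using prob_le_1[of A] prob_le_1[of B] measure_nonneg[of M A] measure_nonneg[of M B]
  by linarith

lemma TV_shift_le_1: "prob_space \<theta> \<Longrightarrow> TV_shift \<theta> s \<le> 1"
  by (intro TV_shift_le prob_space.abs_prob_diff_le_1)

lemma TV_shift_ge:
  assumes "prob_space \<theta>" and "Q \<in> sets borel" "Q \<subseteq> {0..}"
  shows "\<bar>measure \<theta> Q - measure \<theta> ((\<lambda>x. x + s) ` Q)\<bar> \<le> TV_shift \<theta> s"
  unfolding TV_shift_def
proof (rule cSUP_upper)
  show "bdd_above ((\<lambda>Q. \<bar>measure \<theta> Q - measure \<theta> ((\<lambda>x. x + s) ` Q)\<bar>) ` {Q \<in> sets borel. Q \<subseteq> {0..}})"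
    using assms(1) by (intro bdd_aboveI2[where M = 1] prob_space.abs_prob_diff_le_1)
qed (use assms in simp)

lemma TV_shift_nonneg: "prob_space \<theta> \<Longrightarrow> 0 \<le> TV_shift \<theta> s"
  using TV_shift_ge[of \<theta> "{}" s] by simp

lemma bdd_above_TV_shift: "prob_space \<theta> \<Longrightarrow> bdd_above (TV_shift \<theta> ` S)"
  by (intro bdd_aboveI2[where M = 1] TV_shift_le_1)

lemma LTC_if_TV_shift_le:
  assumes prob: "\<And>k. prob_space (\<theta> k)"
    and le: "\<And>k s. 0 \<le> s \<Longrightarrow> TV_shift (\<theta> k) s \<le> s * b k"
    and b: "b \<longlonglongrightarrow> 0"
  shows "LTC \<theta>"
  unfolding LTC_def
proof (intro allI impI)
  fix S :: real assume S: "0 < S"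
  have b_nonneg: "0 \<le> b k" for k
    using TV_shift_nonneg[OF prob, of k 1] le[of 1 k] by simp
  show "(\<lambda>k. SUP s\<in>{0..S}. TV_shift (\<theta> k) s) \<longlonglongrightarrow> 0"
  proof (rule tendsto_sandwich[OF _ _ tendsto_const tendsto_mult_right_zero[OF b, of S]])
    have "0 \<le> (SUP s\<in>{0..S}. TV_shift (\<theta> k) s)" for k
    proof -
      have "0 \<le> TV_shift (\<theta> k) 0"
        by (rule TV_shift_nonneg[OF prob])
      also have "\<dots> \<le> (SUP s\<in>{0..S}. TV_shift (\<theta> k) s)"
        using S by (intro cSUP_upper bdd_above_TV_shift prob) auto
      finally show ?thesis .
    qed
    then show "\<forall>\<^sub>F k in sequentially. 0 \<le> (SUP s\<in>{0..S}. TV_shift (\<theta> k) s)"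
      by simp
    have "TV_shift (\<theta> k) s \<le> S * b k" if "s \<in> {0..S}" for k s
    proof -
      have "TV_shift (\<theta> k) s \<le> s * b k"
        using that by (intro le) simp
      also have "\<dots> \<le> S * b k"
        using that b_nonneg by (intro mult_right_mono) auto
      finally show ?thesis .
    qed
    then show "\<forall>\<^sub>F k in sequentially. (SUP s\<in>{0..S}. TV_shift (\<theta> k) s) \<le> S * b k"
      using S by (intro always_eventually allI cSUP_least) auto
  qed
qed

lemma not_LTC_if_frequently_TV_shift_ge:
  assumes prob: "\<And>k. prob_space (\<theta> k)" and S: "0 < S" and \<epsilon>: "0 < \<epsilon>"
    and large: "\<exists>\<^sub>F k in sequentially. \<exists>s\<in>{0..S}. \<epsilon> \<le> TV_shift (\<theta> k) s"
  shows "\<not> LTC \<theta>"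
proof
  assume "LTC \<theta>"
  then have "(\<lambda>k. SUP s\<in>{0..S}. TV_shift (\<theta> k) s) \<longlonglongrightarrow> 0"
    using S unfolding LTC_def by blast
  then have "\<forall>\<^sub>F k in sequentially. (SUP s\<in>{0..S}. TV_shift (\<theta> k) s) < \<epsilon>"
    using \<epsilon> by (rule order_tendstoD)
  from frequently_ex[OF frequently_eventually_frequently[OF large this]]
  obtain k s where s: "s \<in> {0..S}" and "\<epsilon> \<le> TV_shift (\<theta> k) s"
    and "(SUP s\<in>{0..S}. TV_shift (\<theta> k) s) < \<epsilon>"
    by blast
  moreover have "TV_shift (\<theta> k) s \<le> (SUP s\<in>{0..S}. TV_shift (\<theta> k) s)"
    by (rule cSUP_upper[OF s bdd_above_TV_shift[OF prob]])
  ultimately show False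
    by linarith
qed

abbreviation normal_measure :: "real \<Rightarrow> real \<Rightarrow> real measure" where
  "normal_measure \<mu> \<sigma> \<equiv> density lborel (normal_density \<mu> \<sigma>)"

lemma finite_measure_normal_measure: "0 < \<sigma> \<Longrightarrow> finite_measure (normal_measure \<mu> \<sigma>)"
  using prob_space_normal_density prob_space.axioms(1) by blast

lemma normal_density_le: "0 < \<sigma> \<Longrightarrow> normal_density \<mu> \<sigma> x \<le> 1 / \<sigma>"
proof -
  assume \<sigma>: "0 < \<sigma>"
  have "\<sigma> \<le> sqrt (2 * pi) * \<sigma>"
    using \<sigma> pi_gt3 by (simp add: real_le_rsqrt)
  then have "1 / sqrt (2 * pi * \<sigma>\<^sup>2) \<le> 1 / \<sigma>"
    using \<sigma> by (simp add: real_sqrt_mult divide_left_mono)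
  moreover have "exp (-(x - \<mu>)\<^sup>2 / (2 * \<sigma>\<^sup>2)) \<le> 1"
    by simp
  ultimately have "1 / sqrt (2 * pi * \<sigma>\<^sup>2) * exp (-(x - \<mu>)\<^sup>2 / (2 * \<sigma>\<^sup>2)) \<le> 1 / \<sigma> * 1"
    using \<sigma> by (intro mult_mono) auto
  then show ?thesis
    unfolding normal_density_def by simp
qed

lemma normal_density_ge:
  assumes \<sigma>: "0 < \<sigma>" and x: "\<bar>x - \<mu>\<bar> \<le> \<sigma>"
  shows "1 / (6 * \<sigma>) \<le> normal_density \<mu> \<sigma> x"
proof -
  have "(x - \<mu>)\<^sup>2 \<le> \<sigma>\<^sup>2"
    using abs_le_square_iff[of "x - \<mu>" \<sigma>] x \<sigma> by simp
  then have "1 / 2 \<le> 1 + -(x - \<mu>)\<^sup>2 / (2 * \<sigma>\<^sup>2)"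
    using \<sigma> by (simp add: field_simps)
  also have "\<dots> \<le> exp (-(x - \<mu>)\<^sup>2 / (2 * \<sigma>\<^sup>2))"
    by (rule exp_ge_add_one_self)
  finally have exp_ge: "1 / 2 \<le> exp (-(x - \<mu>)\<^sup>2 / (2 * \<sigma>\<^sup>2))" .
  have "sqrt (2 * pi) \<le> 3"
    using pi_less_4 by (simp add: real_sqrt_le_iff real_le_lsqrt)
  then have "1 / (3 * \<sigma>) \<le> 1 / sqrt (2 * pi * \<sigma>\<^sup>2)"
    using \<sigma> by (simp add: real_sqrt_mult divide_left_mono)
  with exp_ge have "1 / (3 * \<sigma>) * (1 / 2) \<le> 1 / sqrt (2 * pi * \<sigma>\<^sup>2) * exp (-(x - \<mu>)\<^sup>2 / (2 * \<sigma>\<^sup>2))"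
    using \<sigma> by (intro mult_mono) auto
  then show ?thesis
    unfolding normal_density_def by simp
qed

lemma normal_density_mono_dist:
  assumes "\<bar>x - \<mu>\<bar> \<le> \<bar>x - \<nu>\<bar>"
  shows "normal_density \<nu> \<sigma> x \<le> normal_density \<mu> \<sigma> x"
proof -
  have "(x - \<mu>)\<^sup>2 \<le> (x - \<nu>)\<^sup>2"
    using assms by (simp add: abs_le_square_iff)
  then have "-(x - \<nu>)\<^sup>2 / (2 * \<sigma>\<^sup>2) \<le> -(x - \<mu>)\<^sup>2 / (2 * \<sigma>\<^sup>2)"
    by (intro divide_right_mono) auto
  then show ?thesis
    unfolding normal_density_def by (intro mult_left_mono) auto
qed

lemma measure_normal_measure_mono:
  assumes \<sigma>: "0 < \<sigma>" and B: "B \<in> sets borel"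
    and le: "\<And>x. x \<in> B \<Longrightarrow> normal_density \<nu> \<sigma> x \<le> normal_density \<mu> \<sigma> x"
  shows "measure (normal_measure \<nu> \<sigma>) B \<le> measure (normal_measure \<mu> \<sigma>) B"
proof -
  have "emeasure (normal_measure \<nu> \<sigma>) B \<le> emeasure (normal_measure \<mu> \<sigma>) B"
    using B le by (intro emeasure_density_mono) (auto intro: ennreal_leI)
  then show ?thesis
    using finite_measure.emeasure_eq_measure[OF finite_measure_normal_measure[OF \<sigma>]] by simp
qed

lemma measure_normal_measure_Icc_le:
  assumes \<sigma>: "0 < \<sigma>" and "a \<le> b"
  shows "measure (normal_measure \<mu> \<sigma>) {a..b} \<le> (b - a) / \<sigma>"
proof -
  have "emeasure (normal_measure \<mu> \<sigma>) {a..b} \<le> emeasure (density lborel (\<lambda>_. 1 / \<sigma>)) {a..b}"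
    by (rule emeasure_density_mono) (auto intro!: ennreal_leI normal_density_le \<sigma>)
  also have "\<dots> = ennreal ((b - a) / \<sigma>)"
    using assms by (simp add: emeasure_density nn_integral_cmult_indicator ennreal_mult'[symmetric])
  finally show ?thesis
    using assms finite_measure.emeasure_eq_measure[OF finite_measure_normal_measure[OF \<sigma>]] by simp
qed

lemma measure_normal_measure_ge:
  assumes \<sigma>: "0 < \<sigma>"
  shows "1 / 3 \<le> measure (normal_measure \<mu> \<sigma>) {\<mu> - \<sigma>..\<mu> + \<sigma>}"
proof -
  have "ennreal (1 / 3) = emeasure (density lborel (\<lambda>_. 1 / (6 * \<sigma>))) {\<mu> - \<sigma>..\<mu> + \<sigma>}"
    using \<sigma> by (simp add: emeasure_density nn_integral_cmult_indicator ennreal_mult'[symmetric])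
  also have "\<dots> \<le> emeasure (normal_measure \<mu> \<sigma>) {\<mu> - \<sigma>..\<mu> + \<sigma>}"
    by (rule emeasure_density_mono) (auto intro!: ennreal_leI normal_density_ge \<sigma>)
  finally show ?thesis
    using finite_measure.emeasure_eq_measure[OF finite_measure_normal_measure[OF \<sigma>]] by simp
qed

lemma emeasure_normal_measure_vimage_translate:
  assumes A: "A \<in> sets borel"
  shows "emeasure (normal_measure \<mu> \<sigma>) ((\<lambda>x. x - d) -` A) = emeasure (normal_measure (\<mu> - d) \<sigma>) A"
proof -
  have [measurable]: "(\<lambda>x. x - d) -` A \<in> sets borel"
    by (rule measurable_sets_borel[OF _ A]) simp
  have "emeasure (normal_measure \<mu> \<sigma>) ((\<lambda>x. x - d) -` A) =
      (\<integral>\<^sup>+ x. ennreal (normal_density \<mu> \<sigma> x) * indicator ((\<lambda>x. x - d) -` A) x \<partial>lborel)"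
    by (simp add: emeasure_density)
  also have "\<dots> = (\<integral>\<^sup>+ x. ennreal (normal_density \<mu> \<sigma> (d + 1 * x)) * indicator ((\<lambda>x. x - d) -` A) (d + 1 * x) \<partial>lborel)"
    using A by (subst nn_integral_real_affine[where c=1 and t=d]) auto
  also have "\<dots> = (\<integral>\<^sup>+ x. ennreal (normal_density (\<mu> - d) \<sigma> x) * indicator A x \<partial>lborel)"
    by (intro nn_integral_cong) (simp add: normal_density_def indicator_def algebra_simps)
  also have "\<dots> = emeasure (normal_measure (\<mu> - d) \<sigma>) A"
    using A by (simp add: emeasure_density)
  finally show ?thesis .
qed

lemma measure_normal_measure_mean_diff:
  assumes \<sigma>: "0 < \<sigma>" and d: "0 \<le> d" and A: "A \<in> sets borel"
  shows "\<bar>measure (normal_measure \<mu> \<sigma>) A - measure (normal_measure (\<mu> - d) \<sigma>) A\<bar> \<le> d / \<sigma>"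
proof -
  let ?N = "normal_measure \<mu> \<sigma>" and ?N' = "normal_measure (\<mu> - d) \<sigma>"
  interpret N: finite_measure ?N by (rule finite_measure_normal_measure[OF \<sigma>])
  interpret N': finite_measure ?N' by (rule finite_measure_normal_measure[OF \<sigma>])
  define c where "c = \<mu> - d / 2"
  have shift: "measure ?N' X = measure ?N ((\<lambda>x. x - d) -` X)" if "X \<in> sets borel" for X
    using emeasure_normal_measure_vimage_translate[OF that] by (simp add: measure_def)
  have "measure ?N {c..<c + d} \<le> measure ?N {c..c + d}"
    by (intro N.finite_measure_mono) auto
  then have strip: "measure ?N {c..<c + d} \<le> d / \<sigma>"
    using measure_normal_measure_Icc_le[OF \<sigma>, of c "c + d" \<mu>] d by simp
  have "measure ?N A - measure ?N' A \<le> measure ?N {c..} - measure ?N' {c..}"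
    using A d by (intro measure_diff_le_of_positive_set measure_normal_measure_mono
        normal_density_mono_dist N.finite_measure_axioms N'.finite_measure_axioms \<sigma>)
      (auto simp: c_def)
  also have "\<dots> = measure ?N {c..} - measure ?N {c + d..}"
    using shift[of "{c..}"] by (simp add: vimage_def le_diff_eq add.commute atLeast_def)
  also have "\<dots> = measure ?N ({c..} - {c + d..})"
    using d by (intro N.finite_measure_Diff[symmetric]) auto
  also have "{c..} - {c + d..} = {c..<c + d}"
    by auto
  finally have upper: "measure ?N A - measure ?N' A \<le> d / \<sigma>"
    using strip by linarith
  have "measure ?N' A - measure ?N A \<le> measure ?N' {..<c} - measure ?N {..<c}"
    using A d by (intro measure_diff_le_of_positive_set measure_normal_measure_mono
        normal_density_mono_dist N.finite_measure_axioms N'.finite_measure_axioms \<sigma>)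
      (auto simp: c_def)
  also have "\<dots> = measure ?N {..<c + d} - measure ?N {..<c}"
    using shift[of "{..<c}"] by (simp add: vimage_def diff_less_eq lessThan_def)
  also have "\<dots> = measure ?N ({..<c + d} - {..<c})"
    using d by (intro N.finite_measure_Diff[symmetric]) auto
  also have "{..<c + d} - {..<c} = {c..<c + d}"
    by auto
  finally have lower: "measure ?N' A - measure ?N A \<le> d / \<sigma>"
    using strip by linarith
  from upper lower show ?thesis
    by linarith
qed

lemma measure_normal_measure_translate_diff:
  assumes "0 < \<sigma>" "0 \<le> d" and A: "A \<in> sets borel"
  shows "\<bar>measure (normal_measure \<mu> \<sigma>) A - measure (normal_measure \<mu> \<sigma>) ((\<lambda>x. x - d) -` A)\<bar> \<le> d / \<sigma>"
  using measure_normal_measure_mean_diff[OF assms, of \<mu>]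
    emeasure_normal_measure_vimage_translate[OF A, of \<mu> \<sigma> d]
  by (simp add: measure_def)

lemma sets_abs_normal_law [simp]: "sets (abs_normal_law \<mu> \<sigma>) = sets borel"
  by (simp add: abs_normal_law_def)

lemma prob_space_abs_normal_law: "0 < \<sigma> \<Longrightarrow> prob_space (abs_normal_law \<mu> \<sigma>)"
  unfolding abs_normal_law_def by (intro prob_space.prob_space_distr prob_space_normal_density) auto

lemma measure_abs_normal_law:
  assumes \<sigma>: "0 < \<sigma>" and R: "R \<in> sets borel" "R \<subseteq> {0..}"
  shows "measure (abs_normal_law \<mu> \<sigma>) R
    = measure (normal_measure \<mu> \<sigma>) R + measure (normal_measure \<mu> \<sigma>) (uminus -` R)"
proof -
  have "measure (normal_measure \<mu> \<sigma>) {0..0} \<le> 0"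
    using measure_normal_measure_Icc_le[OF \<sigma>, of 0 0] by simp
  then have "measure (normal_measure \<mu> \<sigma>) {0} = 0"
    using measure_nonneg[of "normal_measure \<mu> \<sigma>" "{0}"] by simp
  then show ?thesis
    unfolding abs_normal_law_def
    using measure_distr_abs[OF finite_measure_normal_measure[OF \<sigma>] _ _ R] by simp
qed

lemma measure_abs_normal_law_Icc_ge:
  assumes \<sigma>: "0 < \<sigma>"
  shows "1 / 3 \<le> measure (abs_normal_law \<mu> \<sigma>) {max 0 (\<bar>\<mu>\<bar> - \<sigma>)..\<bar>\<mu>\<bar> + \<sigma>}"
proof -
  let ?R = "{max 0 (\<bar>\<mu>\<bar> - \<sigma>)..\<bar>\<mu>\<bar> + \<sigma>}"
  have "1 / 3 \<le> measure (normal_measure \<mu> \<sigma>) {\<mu> - \<sigma>..\<mu> + \<sigma>}"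
    by (rule measure_normal_measure_ge[OF \<sigma>])
  also have "\<dots> \<le> measure (normal_measure \<mu> \<sigma>) (abs -` ?R)"
    using measurable_sets_borel[of abs borel ?R]
    by (intro finite_measure.finite_measure_mono[OF finite_measure_normal_measure[OF \<sigma>]])
      (auto simp: abs_if)
  also have "\<dots> = measure (abs_normal_law \<mu> \<sigma>) ?R"
    unfolding abs_normal_law_def by (subst measure_distr) auto
  finally show ?thesis .
qed

lemma TV_shift_abs_normal_law_le:
  assumes \<sigma>: "0 < \<sigma>" and t: "0 \<le> t"
  shows "TV_shift (abs_normal_law \<mu> \<sigma>) t \<le> 2 * t / \<sigma>"
proof (rule TV_shift_le)
  fix Q :: "real set" assume Q: "Q \<in> sets borel" "Q \<subseteq> {0..}"
  let ?N = "normal_measure \<mu> \<sigma>"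
  define Q' where "Q' = (\<lambda>x. x - t) -` Q"
  have image_eq: "(\<lambda>x. x + t) ` Q = Q'"
    by (force simp: Q'_def image_iff)
  have Q': "Q' \<in> sets borel" "Q' \<subseteq> {0..}"
    using Q t unfolding Q'_def by (auto intro: measurable_sets_borel[OF _ Q(1)])
  have uQ': "uminus -` Q' \<in> sets borel"
    by (rule measurable_sets_borel[OF _ Q'(1)]) simp
  have "\<bar>measure ?N Q - measure ?N Q'\<bar> \<le> t / \<sigma>"
    unfolding Q'_def by (rule measure_normal_measure_translate_diff[OF \<sigma> t Q(1)])
  moreover have "\<bar>measure ?N (uminus -` Q') - measure ?N (uminus -` Q)\<bar> \<le> t / \<sigma>"
    using measure_normal_measure_translate_diff[OF \<sigma> t uQ', of \<mu>]
    by (simp add: Q'_def vimage_def)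
  ultimately show "\<bar>measure (abs_normal_law \<mu> \<sigma>) Q - measure (abs_normal_law \<mu> \<sigma>) ((\<lambda>x. x + t) ` Q)\<bar>
      \<le> 2 * t / \<sigma>"
    unfolding image_eq measure_abs_normal_law[OF \<sigma> Q] measure_abs_normal_law[OF \<sigma> Q']
    by linarith
qed

lemma TV_shift_abs_normal_law_ge:
  assumes \<sigma>: "0 < \<sigma>" and \<sigma>M: "\<sigma> \<le> M"
  shows "\<exists>t\<in>{0..9 * M}. 1 / 9 \<le> TV_shift (abs_normal_law \<mu> \<sigma>) t"
proof -
  let ?\<theta> = "abs_normal_law \<mu> \<sigma>"
  interpret \<theta>: prob_space ?\<theta>
    by (rule prob_space_abs_normal_law[OF \<sigma>])
  define a b L where "a = max 0 (\<bar>\<mu>\<bar> - \<sigma>)" and "b = \<bar>\<mu>\<bar> + \<sigma>" and "L = 3 * M"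
  define Q where "Q j = {a + real j * L..b + real j * L}" for j :: nat
  have L: "0 < L" "b - a < L"
    using \<sigma> \<sigma>M by (auto simp: a_def b_def L_def)
  have Q0: "1 / 3 \<le> measure ?\<theta> (Q 0)"
    using measure_abs_normal_law_Icc_ge[OF \<sigma>] by (simp add: Q_def a_def b_def)
  have "(\<Sum>j\<in>{0..3}. measure ?\<theta> (Q j)) = measure ?\<theta> (\<Union>j\<in>{0..3}. Q j)"
    using disjoint_family_Icc_translates[OF L]
    by (intro \<theta>.finite_measure_finite_Union[symmetric])
      (auto simp: Q_def intro: disjoint_family_on_mono)
  also have "\<dots> \<le> 1"
    by simp
  finally have sum_le: "(\<Sum>j\<in>{1..3}. measure ?\<theta> (Q j)) \<le> of_nat (card {1..3::nat}) * (2 / 9)"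
    using Q0 by (simp add: sum.atLeast_Suc_atMost)
  obtain j where j: "j \<in> {1..3}" "measure ?\<theta> (Q j) \<le> 2 / 9"
    using exists_le_of_sum_le[OF _ _ sum_le] by auto
  have "1 / 9 \<le> \<bar>measure ?\<theta> (Q 0) - measure ?\<theta> ((\<lambda>x. x + j * L) ` Q 0)\<bar>"
    using Q0 j by (simp add: Q_def)
  also have "\<dots> \<le> TV_shift ?\<theta> (j * L)"
    using L by (intro TV_shift_ge \<theta>.prob_space_axioms) (auto simp: Q_def a_def)
  finally have "1 / 9 \<le> TV_shift ?\<theta> (j * L)" .
  moreover have "j * L \<in> {0..9 * M}"
    using j L mult_right_mono[of "real j" 3 L] by (auto simp: L_def)
  ultimately show ?thesis
    by blast
qed

theorem mainTheorem2:
  fixes m \<sigma> :: "nat \<Rightarrow> real"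
  assumes "\<And>k. \<sigma> k > 0"
  shows "LTC (\<lambda>k. abs_normal_law (m k) (\<sigma> k)) \<longleftrightarrow> filterlim \<sigma> at_top sequentially"
proof
  assume LTC: "LTC (\<lambda>k. abs_normal_law (m k) (\<sigma> k))"
  show "filterlim \<sigma> at_top sequentially"
  proof (rule ccontr)
    assume "\<not> filterlim \<sigma> at_top sequentially"
    then obtain Z where "\<exists>\<^sub>F k in sequentially. \<sigma> k < Z"
      by (auto simp: filterlim_at_top not_eventually not_le)
    then have "\<exists>\<^sub>F k in sequentially. \<sigma> k \<le> max Z 1"
      by (rule frequently_elim1) simp
    then have "\<exists>\<^sub>F k in sequentially. \<exists>t\<in>{0..9 * max Z 1}.
        1 / 9 \<le> TV_shift (abs_normal_law (m k) (\<sigma> k)) t"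
      by (rule frequently_elim1) (rule TV_shift_abs_normal_law_ge[OF assms])
    then show False
      using LTC not_LTC_if_frequently_TV_shift_ge[of _ "9 * max Z 1" "1 / 9"]
      by (simp add: prob_space_abs_normal_law assms)
  qed
next
  assume "filterlim \<sigma> at_top sequentially"
  then have "(\<lambda>k. 2 / \<sigma> k) \<longlonglongrightarrow> 0"
    by (intro tendsto_divide_0[OF tendsto_const] filterlim_at_top_imp_at_infinity)
  then show "LTC (\<lambda>k. abs_normal_law (m k) (\<sigma> k))"
    using TV_shift_abs_normal_law_le[OF assms]
    by (intro LTC_if_TV_shift_le[where b = "\<lambda>k. 2 / \<sigma> k"] prob_space_abs_normal_law assms)
      (simp_all add: mult.commute)
qed

end
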